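(* Let $f:\mathbb R^n\to\mathbb R^n$ satisfy the QUAD condition with constant $\delta>0$, let $\epsilon_1,\epsilon_2>0$, $0<p<1$, $q>1$, and let $s:[0,\infty)\to\mathbb R^n$ satisfy $\dot s=f(s)$. Consider $$\dot x=f(x)-\epsilon_1\mathrm{sig}^p(x-s)-\epsilon_2\mathrm{sig}^q(x-s),\qquad x(t)\in\mathbb R^n.$$ Let $\bar\alpha=\epsilon_1 2^{(1+p)/2}$ and $\bar\beta=\epsilon_2 n^{(1-q)/2}2^{(1+q)/2}$. If $\bar\alpha-2\delta>0$ and $\bar\beta-2\delta>0$, then for every initial condition and every solution, $x(t)=s(t)$ for all $t\ge T_{\max}=\frac{2}{(\bar\alpha-2\delta)(1-p)}+\frac{2}{(\bar\beta-2\delta)(q-1)}$.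
   Context: For $x\in\mathbb R^n$ and $r>0$, $\mathrm{sig}^r(x)=(\mathrm{sign}(x^1)|x^1|^r,\dots,\mathrm{sign}(x^n)|x^n|^r)^T$. QUAD condition with constant $\delta>0$: $(x-y)^T(f(x)-f(y))\le\delta(x-y)^T(x-y)$ for all $x,y\in\mathbb R^n$. *)

theory Defs
  imports "HOL-Analysis.Analysis"
begin

definition sig :: "real \<Rightarrow> real^'n \<Rightarrow> real^'n" where
  "sig r x = (\<chi> i. sgn (x $ i) * \<bar>x $ i\<bar> powr r)"

definition QUAD :: "(real^'n \<Rightarrow> real^'n) \<Rightarrow> real \<Rightarrow> bool" where
  "QUAD f \<delta> \<longleftrightarrow> (\<forall>x y. (x - y) \<bullet> (f x - f y) \<le> \<delta> * ((x - y) \<bullet> (x - y)))"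

end

theory Submission
  imports Defs
begin

text \<open>
  For the error \<open>e = x - s\<close> and \<open>V = \<bar>e\<bar>\<^sup>2 / 2\<close>, the QUAD condition and the power-mean
  inequalities for \<open>e \<bullet> sig r e\<close> give \<open>V' \<le> -(\<alpha> - 2\<delta>) V\<^bsup>(1+p)/2\<^esup>\<close> while \<open>V \<le> 1\<close> and
  \<open>V' \<le> -(\<beta> - 2\<delta>) V\<^bsup>(1+q)/2\<^esup>\<close> while \<open>V \<ge> 1\<close>. Whenever \<open>V' \<le> -c V\<^sup>a\<close> with \<open>a \<noteq> 1\<close>,
  the quantity \<open>V\<^bsup>1-a\<^esup> / (1 - a)\<close> decreases at rate at least \<open>c\<close>; hence \<open>V\<close> drops below \<open>1\<close>
  within time \<open>2 / ((\<beta> - 2\<delta>)(q - 1))\<close>, then reaches \<open>0\<close> within a further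
  \<open>2 / ((\<alpha> - 2\<delta>)(1 - p))\<close>, and being nonincreasing it stays there.
\<close>

lemma deriv_le_imp_diff_le:
  fixes h h' :: "real \<Rightarrow> real"
  assumes "a \<le> b"
    and deriv: "\<And>t. t \<in> {a..b} \<Longrightarrow> (h has_real_derivative h' t) (at t within {a..b})"
    and bound: "\<And>t. t \<in> {a<..<b} \<Longrightarrow> h' t \<le> k"
  shows "h b - h a \<le> k * (b - a)"
proof (cases "a = b")
  case False
  with \<open>a \<le> b\<close> have "a < b" by simp
  from mvt_simple[OF this, of h "\<lambda>t y. h' t * y"] deriv
  obtain t where "t \<in> {a<..<b}" "h b - h a = h' t * (b - a)"
    by (auto simp: has_field_derivative_def)
  with bound \<open>a < b\<close> show ?thesis by (simp add: mult_right_mono)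
qed simp

lemma powr_decay_along_deriv:
  fixes V V' :: "real \<Rightarrow> real"
  assumes "u \<le> v" "a \<noteq> 1"
    and pos: "\<And>t. t \<in> {u..v} \<Longrightarrow> 0 < V t"
    and deriv: "\<And>t. t \<in> {u..v} \<Longrightarrow> (V has_real_derivative V' t) (at t within {u..v})"
    and decay: "\<And>t. t \<in> {u<..<v} \<Longrightarrow> V' t \<le> - c * V t powr a"
  shows "(V v powr (1 - a) - V u powr (1 - a)) / (1 - a) \<le> - c * (v - u)"
proof -
  have "((\<lambda>t. V t powr (1 - a) / (1 - a)) has_real_derivative V t powr (- a) * V' t)
          (at t within {u..v})" if "t \<in> {u..v}" for t
    using deriv[OF that] pos[OF that] \<open>a \<noteq> 1\<close>
    by (auto intro!: derivative_eq_intros)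
  moreover have "V t powr (- a) * V' t \<le> - c" if "t \<in> {u<..<v}" for t
  proof -
    have "V t powr (- a) * V' t \<le> V t powr (- a) * (- c * V t powr a)"
      using decay[OF that] by (intro mult_left_mono) auto
    also have "\<dots> = - c"
      using pos[of t] that by (simp add: powr_add[symmetric])
    finally show ?thesis .
  qed
  ultimately have "V v powr (1 - a) / (1 - a) - V u powr (1 - a) / (1 - a) \<le> - c * (v - u)"
    by (rule deriv_le_imp_diff_le[OF \<open>u \<le> v\<close>])
  then show ?thesis by (simp add: diff_divide_distrib)
qed

lemma nonincreasing_if_deriv_nonpos:
  fixes V V' :: "real \<Rightarrow> real"
  assumes "a \<le> u" "u \<le> v"
    and deriv: "\<And>t. a \<le> t \<Longrightarrow> (V has_real_derivative V' t) (at t within {a..})"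
    and nonpos: "\<And>t. a \<le> t \<Longrightarrow> V' t \<le> 0"
  shows "V v \<le> V u"
proof -
  have "V v - V u \<le> 0 * (v - u)"
  proof (rule deriv_le_imp_diff_le[OF \<open>u \<le> v\<close>])
    show "(V has_real_derivative V' t) (at t within {u..v})" if "t \<in> {u..v}" for t
      using DERIV_subset[OF deriv] that \<open>a \<le> u\<close> by auto
  qed (use nonpos \<open>a \<le> u\<close> in auto)
  then show ?thesis by simp
qed

lemma time_above_one_less:
  fixes V V' :: "real \<Rightarrow> real"
  assumes "u \<le> v" "b > 1" "c > 0"
    and above: "\<And>t. t \<in> {u..v} \<Longrightarrow> 1 < V t"
    and deriv: "\<And>t. t \<in> {u..v} \<Longrightarrow> (V has_real_derivative V' t) (at t within {u..v})"
    and decay: "\<And>t. t \<in> {u<..<v} \<Longrightarrow> V' t \<le> - c * V t powr b"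
  shows "v - u < 1 / (c * (b - 1))"
proof -
  have "(V v powr (1 - b) - V u powr (1 - b)) / (1 - b) \<le> - c * (v - u)"
    using assms by (intro powr_decay_along_deriv) (auto intro: less_trans[OF zero_less_one])
  then have "c * (b - 1) * (v - u) \<le> V v powr (1 - b) - V u powr (1 - b)"
    using \<open>b > 1\<close> by (simp add: field_simps)
  also have "\<dots> < 1"
    using above[of v] \<open>u \<le> v\<close> \<open>b > 1\<close> by (smt (verit) atLeastAtMost_iff powr_ge_zero powr_less_one)
  finally show ?thesis
    using \<open>b > 1\<close> \<open>c > 0\<close> by (simp add: field_simps)
qed

lemma time_positive_less:
  fixes V V' :: "real \<Rightarrow> real"
  assumes "u \<le> v" "a < 1" "c > 0" "V u \<le> 1"
    and pos: "\<And>t. t \<in> {u..v} \<Longrightarrow> 0 < V t"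
    and deriv: "\<And>t. t \<in> {u..v} \<Longrightarrow> (V has_real_derivative V' t) (at t within {u..v})"
    and decay: "\<And>t. t \<in> {u<..<v} \<Longrightarrow> V' t \<le> - c * V t powr a"
  shows "v - u < 1 / (c * (1 - a))"
proof -
  have "(V v powr (1 - a) - V u powr (1 - a)) / (1 - a) \<le> - c * (v - u)"
    using assms by (intro powr_decay_along_deriv) auto
  then have "c * (1 - a) * (v - u) \<le> V u powr (1 - a) - V v powr (1 - a)"
    using \<open>a < 1\<close> by (simp add: field_simps)
  also have "\<dots> < 1"
    using pos[of u] pos[of v] \<open>u \<le> v\<close> \<open>a < 1\<close> \<open>V u \<le> 1\<close>
    by (smt (verit) atLeastAtMost_iff powr_gt_zero powr_le1)
  finally show ?thesis
    using \<open>a < 1\<close> \<open>c > 0\<close> by (simp add: field_simps)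
qed

lemma finite_time_stability:
  fixes V V' :: "real \<Rightarrow> real"
  assumes nonneg: "\<And>t. 0 \<le> t \<Longrightarrow> 0 \<le> V t"
    and deriv: "\<And>t. 0 \<le> t \<Longrightarrow> (V has_real_derivative V' t) (at t within {0..})"
    and below_one: "\<And>t. 0 \<le> t \<Longrightarrow> V t \<le> 1 \<Longrightarrow> V' t \<le> - c1 * V t powr a"
    and above_one: "\<And>t. 0 \<le> t \<Longrightarrow> 1 \<le> V t \<Longrightarrow> V' t \<le> - c2 * V t powr b"
    and "c1 > 0" "c2 > 0" "a < 1" "b > 1"
    and time: "1 / (c1 * (1 - a)) + 1 / (c2 * (b - 1)) \<le> t"
  shows "V t = 0"
proof -
  have deriv_on: "(V has_real_derivative V' t) (at t within {u..v})" if "0 \<le> u" "t \<in> {u..v}" for u v t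
    using DERIV_subset[OF deriv] that by auto
  have "V' t \<le> 0" if "0 \<le> t" for t
  proof -
    have "0 \<le> c1 * V t powr a" "0 \<le> c2 * V t powr b"
      using \<open>c1 > 0\<close> \<open>c2 > 0\<close> by simp_all
    then show ?thesis
      using below_one[OF that] above_one[OF that] by (cases "V t \<le> 1") auto
  qed
  then have nonincreasing: "V v \<le> V u" if "0 \<le> u" "u \<le> v" for u v
    using nonincreasing_if_deriv_nonpos[OF that deriv] by blast
  define T1 where "T1 = 1 / (c1 * (1 - a))"
  define T2 where "T2 = 1 / (c2 * (b - 1))"
  have "T1 > 0" "T2 > 0"
    using \<open>c1 > 0\<close> \<open>c2 > 0\<close> \<open>a < 1\<close> \<open>b > 1\<close> unfolding T1_def T2_def by auto
  have "\<exists>t1 \<in> {0..T2}. V t1 \<le> 1"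
  proof (rule ccontr)
    assume "\<not> ?thesis"
    then have above: "1 < V t" if "t \<in> {0..T2}" for t
      using that by (meson not_le)
    have "T2 - 0 < 1 / (c2 * (b - 1))"
    proof (rule time_above_one_less)
      show "V' t \<le> - c2 * V t powr b" if "t \<in> {0<..<T2}" for t
        using above_one[of t] above[of t] that by auto
    qed (use \<open>T2 > 0\<close> \<open>b > 1\<close> \<open>c2 > 0\<close> above deriv_on in simp_all)
    then show False unfolding T2_def by simp
  qed
  then obtain t1 where t1: "t1 \<in> {0..T2}" "V t1 \<le> 1" ..
  have "\<exists>t2 \<in> {t1..t1 + T1}. V t2 = 0"
  proof (rule ccontr)
    assume "\<not> ?thesis"
    then have pos: "0 < V t" if "t \<in> {t1..t1 + T1}" for t
      using that nonneg[of t] t1(1) by (metis atLeastAtMost_iff less_eq_real_def order_trans)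
    have "t1 + T1 - t1 < 1 / (c1 * (1 - a))"
    proof (rule time_positive_less)
      show "V' t \<le> - c1 * V t powr a" if "t \<in> {t1<..<t1 + T1}" for t
        using below_one[of t] nonincreasing[of t1 t] t1 that by auto
    qed (use \<open>T1 > 0\<close> \<open>a < 1\<close> \<open>c1 > 0\<close> t1 pos deriv_on in simp_all)
    then show False unfolding T1_def by simp
  qed
  then obtain t2 where t2: "t2 \<in> {t1..t1 + T1}" "V t2 = 0" ..
  have "t2 \<le> t"
    using time t1 t2 unfolding T1_def T2_def by auto
  with nonincreasing[of t2 t] nonneg[of t] t1 t2 show ?thesis by auto
qed

lemma finite_time_stability_linear_perturbation:
  fixes V V' :: "real \<Rightarrow> real"
  assumes nonneg: "\<And>t. 0 \<le> t \<Longrightarrow> 0 \<le> V t"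
    and deriv: "\<And>t. 0 \<le> t \<Longrightarrow> (V has_real_derivative V' t) (at t within {0..})"
    and decay: "\<And>t. 0 \<le> t \<Longrightarrow> V' t \<le> d * V t - \<alpha> * V t powr a - \<beta> * V t powr b"
    and "0 \<le> d" "\<alpha> - d > 0" "\<beta> - d > 0" "a < 1" "b > 1"
    and "1 / ((\<alpha> - d) * (1 - a)) + 1 / ((\<beta> - d) * (b - 1)) \<le> t"
  shows "V t = 0"
proof (rule finite_time_stability[OF nonneg deriv])
  show "V' t' \<le> - (\<alpha> - d) * V t' powr a" if "0 \<le> t'" "V t' \<le> 1" for t'
  proof -
    have "V t' \<le> V t' powr a"
      using powr_mono'[of a 1 "V t'"] nonneg[OF \<open>0 \<le> t'\<close>] that \<open>a < 1\<close> by simp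
    then have "d * V t' \<le> d * V t' powr a"
      using \<open>0 \<le> d\<close> by (rule mult_left_mono)
    moreover have "0 \<le> \<beta> * V t' powr b"
      using \<open>0 \<le> d\<close> \<open>\<beta> - d > 0\<close> by simp
    ultimately show ?thesis
      using decay[OF \<open>0 \<le> t'\<close>] by (simp add: left_diff_distrib)
  qed
  show "V' t' \<le> - (\<beta> - d) * V t' powr b" if "0 \<le> t'" "1 \<le> V t'" for t'
  proof -
    have "V t' \<le> V t' powr b"
      using powr_mono[of 1 b "V t'"] that \<open>b > 1\<close> by simp
    then have "d * V t' \<le> d * V t' powr b"
      using \<open>0 \<le> d\<close> by (rule mult_left_mono)
    moreover have "0 \<le> \<alpha> * V t' powr a"
      using \<open>0 \<le> d\<close> \<open>\<alpha> - d > 0\<close> by simp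
    ultimately show ?thesis
      using decay[OF \<open>0 \<le> t'\<close>] by (simp add: left_diff_distrib)
  qed
qed (use assms in auto)

lemma powr_add_le_add_powr:
  fixes u v a :: real
  assumes "0 \<le> u" "0 \<le> v" "0 < a" "a \<le> 1"
  shows "(u + v) powr a \<le> u powr a + v powr a"
proof (cases "u + v = 0")
  case False
  define w where "w = u + v"
  have "w > 0" using False assms unfolding w_def by simp
  have "u / w \<le> (u / w) powr a" "v / w \<le> (v / w) powr a"
    using assms \<open>w > 0\<close> powr_mono'[of a 1] by (simp_all add: w_def)
  moreover have "u / w + v / w = 1"
    using \<open>w > 0\<close> by (simp add: w_def add_divide_distrib[symmetric])
  ultimately have "w powr a * 1 \<le> w powr a * ((u / w) powr a + (v / w) powr a)"
    by (intro mult_left_mono) auto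
  also have "\<dots> = u powr a + v powr a"
    using \<open>w > 0\<close> by (simp add: powr_divide distrib_left)
  finally show ?thesis by (simp add: w_def)
qed (use assms in simp)

lemma powr_sum_le_sum_powr:
  fixes y :: "'i \<Rightarrow> real"
  assumes "finite S" "\<And>i. i \<in> S \<Longrightarrow> 0 \<le> y i" "0 < a" "a \<le> 1"
  shows "(\<Sum>i\<in>S. y i) powr a \<le> (\<Sum>i\<in>S. y i powr a)"
  using assms
proof (induction S rule: finite_induct)
  case (insert j S)
  then have "(y j + (\<Sum>i\<in>S. y i)) powr a \<le> y j powr a + (\<Sum>i\<in>S. y i) powr a"
    by (intro powr_add_le_add_powr) (auto intro: sum_nonneg)
  with insert show ?case by simp
qed simp

lemma powr_sum_le_card_powr_sum_powr_pos:
  fixes y :: "'i \<Rightarrow> real"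
  assumes "finite S" "S \<noteq> {}" "\<And>i. i \<in> S \<Longrightarrow> 0 < y i" "1 \<le> b"
  shows "(\<Sum>i\<in>S. y i) powr b \<le> real (card S) powr (b - 1) * (\<Sum>i\<in>S. y i powr b)"
proof -
  define m where "m = real (card S)"
  have "m > 0" using assms unfolding m_def by (simp add: card_gt_0_iff)
  have "(\<Sum>i\<in>S. (1 / m) *\<^sub>R y i) powr b \<le> (\<Sum>i\<in>S. (1 / m) * y i powr b)"
    using assms \<open>m > 0\<close> by (intro convex_on_sum[OF _ _ powr_convex]) (auto simp: m_def)
  then have "(\<Sum>i\<in>S. y i) powr b / m powr b \<le> (\<Sum>i\<in>S. y i powr b) / m"
    by (simp add: sum_divide_distrib[symmetric] powr_divide)
  then have "(\<Sum>i\<in>S. y i) powr b \<le> m powr b / m * (\<Sum>i\<in>S. y i powr b)"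
    using \<open>m > 0\<close> by (simp add: field_simps)
  also have "m powr b / m = m powr (b - 1)"
    using \<open>m > 0\<close> by (simp add: powr_diff)
  finally show ?thesis unfolding m_def .
qed

text \<open>Zero terms are dropped first, because \<open>powr_convex\<close> only covers the open half-line.\<close>

lemma powr_sum_le_card_powr_sum_powr:
  fixes y :: "'i \<Rightarrow> real"
  assumes S: "finite S" and y: "\<And>i. i \<in> S \<Longrightarrow> 0 \<le> y i" and b: "1 \<le> b"
  shows "(\<Sum>i\<in>S. y i) powr b \<le> real (card S) powr (b - 1) * (\<Sum>i\<in>S. y i powr b)"
proof -
  define S' where "S' = {i \<in> S. 0 < y i}"
  have "S' \<subseteq> S" "finite S'" using S unfolding S'_def by auto
  have zero: "y i = 0" if "i \<in> S - S'" for i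
    using y that unfolding S'_def by force
  have sums: "(\<Sum>i\<in>S. y i) = (\<Sum>i\<in>S'. y i)" "(\<Sum>i\<in>S. y i powr b) = (\<Sum>i\<in>S'. y i powr b)"
    using zero by (auto intro: sum.mono_neutral_right[OF S \<open>S' \<subseteq> S\<close>])
  show ?thesis
  proof (cases "S' = {}")
    case True
    then show ?thesis using sums by (simp add: sum_nonneg)
  next
    case False
    have "(\<Sum>i\<in>S'. y i) powr b \<le> real (card S') powr (b - 1) * (\<Sum>i\<in>S'. y i powr b)"
      using \<open>finite S'\<close> False b by (intro powr_sum_le_card_powr_sum_powr_pos) (auto simp: S'_def)
    also have "\<dots> \<le> real (card S) powr (b - 1) * (\<Sum>i\<in>S'. y i powr b)"
      using b card_mono[OF S \<open>S' \<subseteq> S\<close>] False \<open>finite S'\<close>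
      by (intro mult_right_mono powr_mono2 sum_nonneg) (auto simp: card_gt_0_iff)
    finally show ?thesis using sums by simp
  qed
qed

lemma inner_sig_self:
  fixes x :: "real^'n"
  shows "x \<bullet> sig r x = (\<Sum>i\<in>UNIV. ((x $ i)\<^sup>2) powr ((1 + r) / 2))"
proof -
  have "v * (sgn v * \<bar>v\<bar> powr r) = (v\<^sup>2) powr ((1 + r) / 2)" for v :: real
  proof (cases "v = 0")
    case False
    have "v * (sgn v * \<bar>v\<bar> powr r) = \<bar>v\<bar> * \<bar>v\<bar> powr r"
      by (simp add: abs_sgn mult.assoc[symmetric] mult.commute)
    also have "\<dots> = \<bar>v\<bar> powr (1 + r)"
      using False by (simp add: powr_add)
    also have "\<dots> = (\<bar>v\<bar> powr 2) powr ((1 + r) / 2)"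
      by (simp only: powr_powr times_divide_eq_right nonzero_mult_div_cancel_left zero_neq_numeral)
    also have "\<bar>v\<bar> powr 2 = v\<^sup>2"
      using False by (simp add: powr_realpow)
    finally show ?thesis .
  qed simp
  then show ?thesis unfolding sig_def inner_vec_def by simp
qed

lemma inner_self_eq_sum_square: "x \<bullet> x = (\<Sum>i\<in>UNIV. (x $ i)\<^sup>2)"
  for x :: "real^'n"
  unfolding inner_vec_def by (simp add: power2_eq_square)

lemma inner_self_powr_le_inner_sig:
  fixes x :: "real^'n"
  assumes "0 < r" "r \<le> 1"
  shows "(x \<bullet> x) powr ((1 + r) / 2) \<le> x \<bullet> sig r x"
  unfolding inner_sig_self inner_self_eq_sum_square
  using assms by (intro powr_sum_le_sum_powr) auto

lemma card_powr_mult_inner_self_powr_le_inner_sig: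
  fixes x :: "real^'n"
  assumes "1 \<le> r"
  shows "real CARD('n) powr ((1 - r) / 2) * (x \<bullet> x) powr ((1 + r) / 2) \<le> x \<bullet> sig r x"
proof -
  let ?n = "real CARD('n)" and ?b = "(1 + r) / 2"
  have "(x \<bullet> x) powr ?b \<le> ?n powr (?b - 1) * (x \<bullet> sig r x)"
    unfolding inner_sig_self inner_self_eq_sum_square
    using assms by (intro powr_sum_le_card_powr_sum_powr) auto
  then have "?n powr ((1 - r) / 2) * (x \<bullet> x) powr ?b
      \<le> (?n powr ((1 - r) / 2) * ?n powr (?b - 1)) * (x \<bullet> sig r x)"
    by (simp add: mult_left_mono mult.assoc)
  also have "?n powr ((1 - r) / 2) * ?n powr (?b - 1) = 1"
    by (simp add: powr_add[symmetric] diff_divide_distrib add_divide_distrib)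
  finally show ?thesis by simp
qed

lemma has_real_derivative_half_inner_self:
  assumes "(e has_vector_derivative e') (at t within S)"
  shows "((\<lambda>t. e t \<bullet> e t / 2) has_real_derivative e t \<bullet> e') (at t within S)"
proof -
  have e: "(e has_derivative (\<lambda>h. h *\<^sub>R e')) (at t within S)"
    using assms unfolding has_vector_derivative_def .
  have "((\<lambda>t. e t \<bullet> e t) has_derivative (\<lambda>h. e t \<bullet> (h *\<^sub>R e') + (h *\<^sub>R e') \<bullet> e t)) (at t within S)"
    by (rule has_derivative_inner[OF e e])
  moreover have "(\<lambda>h. e t \<bullet> (h *\<^sub>R e') + (h *\<^sub>R e') \<bullet> e t) = (*) (2 * (e t \<bullet> e'))"
    by (auto simp: fun_eq_iff inner_commute algebra_simps)
  ultimately have "((\<lambda>t. e t \<bullet> e t) has_real_derivative 2 * (e t \<bullet> e')) (at t within S)"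
    unfolding has_field_derivative_def by simp
  from DERIV_cdivide[OF this, of 2] show ?thesis by simp
qed

lemma QUAD_sig_dissipation:
  fixes f :: "real^'n \<Rightarrow> real^'n" and x y :: "real^'n"
  assumes quad: "QUAD f \<delta>" and eps: "0 \<le> \<epsilon>1" "0 \<le> \<epsilon>2"
    and p: "0 < p" "p \<le> 1" and q: "1 \<le> q"
  defines "V \<equiv> (x - y) \<bullet> (x - y) / 2"
  shows "(x - y) \<bullet> (f x - \<epsilon>1 *\<^sub>R sig p (x - y) - \<epsilon>2 *\<^sub>R sig q (x - y) - f y)
    \<le> 2 * \<delta> * V - \<epsilon>1 * 2 powr ((1 + p) / 2) * V powr ((1 + p) / 2)
      - \<epsilon>2 * real CARD('n) powr ((1 - q) / 2) * 2 powr ((1 + q) / 2) * V powr ((1 + q) / 2)"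
proof -
  let ?e = "x - y"
  have inner_self: "?e \<bullet> ?e = 2 * V"
    unfolding V_def by simp
  have split: "?e \<bullet> (f x - \<epsilon>1 *\<^sub>R sig p ?e - \<epsilon>2 *\<^sub>R sig q ?e - f y)
      = ?e \<bullet> (f x - f y) - \<epsilon>1 * (?e \<bullet> sig p ?e) - \<epsilon>2 * (?e \<bullet> sig q ?e)"
    by (simp add: inner_diff_right algebra_simps)
  have "?e \<bullet> (f x - f y) \<le> \<delta> * (2 * V)"
    using quad inner_self unfolding QUAD_def by metis
  moreover have "\<epsilon>1 * ((2 * V) powr ((1 + p) / 2)) \<le> \<epsilon>1 * (?e \<bullet> sig p ?e)"
    using inner_self_powr_le_inner_sig[OF p, of ?e] inner_self eps by (intro mult_left_mono) auto
  moreover have "\<epsilon>2 * (real CARD('n) powr ((1 - q) / 2) * (2 * V) powr ((1 + q) / 2))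
      \<le> \<epsilon>2 * (?e \<bullet> sig q ?e)"
    using card_powr_mult_inner_self_powr_le_inner_sig[OF q, of ?e] inner_self eps
    by (intro mult_left_mono) auto
  moreover have "(2 * V) powr r = 2 powr r * V powr r" for r
    using powr_mult[of 2 V r] unfolding V_def by simp
  ultimately show ?thesis
    unfolding split by (simp add: algebra_simps)
qed

theorem theorem3:
  fixes f :: "real^'n \<Rightarrow> real^'n"
    and s x :: "real \<Rightarrow> real^'n"
    and \<delta> \<epsilon>1 \<epsilon>2 p q :: real
  assumes quad: "QUAD f \<delta>" and delta_pos: "\<delta> > 0"
    and eps1: "\<epsilon>1 > 0" and eps2: "\<epsilon>2 > 0"
    and p: "0 < p" "p < 1" and q: "q > 1"
    and s_sol: "\<And>t. t \<ge> 0 \<Longrightarrow> (s has_vector_derivative f (s t)) (at t within {0..})"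
    and x_sol: "\<And>t. t \<ge> 0 \<Longrightarrow> (x has_vector_derivative
              (f (x t) - \<epsilon>1 *\<^sub>R sig p (x t - s t) - \<epsilon>2 *\<^sub>R sig q (x t - s t)))
              (at t within {0..})"
    and alpha_cond: "\<epsilon>1 * 2 powr ((1 + p) / 2) - 2 * \<delta> > 0"
    and beta_cond: "\<epsilon>2 * real CARD('n) powr ((1 - q) / 2) * 2 powr ((1 + q) / 2) - 2 * \<delta> > 0"
  shows "\<forall>t \<ge> 2 / ((\<epsilon>1 * 2 powr ((1 + p) / 2) - 2 * \<delta>) * (1 - p))
              + 2 / ((\<epsilon>2 * real CARD('n) powr ((1 - q) / 2) * 2 powr ((1 + q) / 2) - 2 * \<delta>) * (q - 1)).
           x t = s t"
proof (intro allI impI)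
  fix t
  define \<alpha> where "\<alpha> = \<epsilon>1 * 2 powr ((1 + p) / 2)"
  define \<beta> where "\<beta> = \<epsilon>2 * real CARD('n) powr ((1 - q) / 2) * 2 powr ((1 + q) / 2)"
  define V where "V t = (x t - s t) \<bullet> (x t - s t) / 2" for t
  define V' where "V' t = (x t - s t) \<bullet>
    (f (x t) - \<epsilon>1 *\<^sub>R sig p (x t - s t) - \<epsilon>2 *\<^sub>R sig q (x t - s t) - f (s t))" for t
  assume "t \<ge> 2 / ((\<epsilon>1 * 2 powr ((1 + p) / 2) - 2 * \<delta>) * (1 - p))
              + 2 / ((\<epsilon>2 * real CARD('n) powr ((1 - q) / 2) * 2 powr ((1 + q) / 2) - 2 * \<delta>) * (q - 1))"
  then have T: "1 / ((\<alpha> - 2 * \<delta>) * (1 - (1 + p) / 2)) + 1 / ((\<beta> - 2 * \<delta>) * ((1 + q) / 2 - 1)) \<le> t"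
    unfolding \<alpha>_def \<beta>_def by (simp add: field_simps)
  have V_deriv: "(V has_real_derivative V' t) (at t within {0..})" if "0 \<le> t" for t
    unfolding V_def V'_def
    by (rule has_real_derivative_half_inner_self[OF has_vector_derivative_diff[OF x_sol s_sol]])
      (use that in simp_all)
  have V'_le: "V' t \<le> 2 * \<delta> * V t - \<alpha> * V t powr ((1 + p) / 2) - \<beta> * V t powr ((1 + q) / 2)" for t
    unfolding V_def V'_def \<alpha>_def \<beta>_def
    using QUAD_sig_dissipation[OF quad _ _ p(1) _ _] eps1 eps2 p q by simp
  have "V t = 0"
    using alpha_cond beta_cond delta_pos p q T unfolding \<alpha>_def[symmetric] \<beta>_def[symmetric]
    by (intro finite_time_stability_linear_perturbation[OF _ V_deriv V'_le]) (simp_all add: V_def)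
  then show "x t = s t"
    unfolding V_def by simp
qed

end
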